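(* Every real-valued function $f$ on streams that is subadditive, non-negative, bounded and monotone is $2$-almost-smooth.
   Context: For disjoint consecutive segments $A,B$ of a stream, $AB$ denotes their concatenation; $n$ is a size measure of the stream. $f$ is subadditive if $f(AB)\le f(A)+f(B)$ for all disjoint segments $A,B$; non-negative if $f(A)\ge0$; bounded if $f(A)\le\mathrm{poly}(n)$ for every stream $A$; monotone if $f(AB)\ge f(B)$ and $f(AB)\ge f(A)$ for all disjoint segments $A,B$. A function is $d$-almost-smooth if it is $(1,d)$-almost-smooth, where $f$ is $(c,d)$-almost-smooth ($c,d\ge1$) if: (1) $f(A)\ge0$ for all $A$; (2) $f(B)\le c\,f(AB)$ for all disjoint segments $A,B$; (3) $f(A)\le\mathrm{poly}(n)$; (4) for all disjoint consecutive segments $A,B,C$ with $f(AB)\neq0$ and $f(ABC)\ne0$, $\frac{f(B)}{f(AB)}\le d\cdot\frac{f(BC)}{f(ABC)}$. *)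

theory Defs
  imports Complex_Main
begin

text \<open>Streams are modelled as lists over an item type; a segment is itself a list,
and the concatenation AB of consecutive disjoint segments is A @ B.
The size measure n of a stream is its length.\<close>

definition subadditive :: "('a list \<Rightarrow> real) \<Rightarrow> bool" where
  "subadditive f \<longleftrightarrow> (\<forall>A B. f (A @ B) \<le> f A + f B)"

definition nonneg :: "('a list \<Rightarrow> real) \<Rightarrow> bool" where
  "nonneg f \<longleftrightarrow> (\<forall>A. f A \<ge> 0)"

definition poly_bounded :: "('a list \<Rightarrow> real) \<Rightarrow> bool" where
  "poly_bounded f \<longleftrightarrow> (\<exists>c::real. \<exists>k::nat. \<forall>A. f A \<le> c * (real (length A) + 1) ^ k)"

definition stream_monotone :: "('a list \<Rightarrow> real) \<Rightarrow> bool" where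
  "stream_monotone f \<longleftrightarrow> (\<forall>A B. f (A @ B) \<ge> f B \<and> f (A @ B) \<ge> f A)"

definition almost_smooth :: "real \<Rightarrow> real \<Rightarrow> ('a list \<Rightarrow> real) \<Rightarrow> bool" where
  "almost_smooth c d f \<longleftrightarrow> c \<ge> 1 \<and> d \<ge> 1 \<and>
     (\<forall>A. f A \<ge> 0) \<and>
     (\<forall>A B. f B \<le> c * f (A @ B)) \<and>
     poly_bounded f \<and>
     (\<forall>A B C. f (A @ B) \<noteq> 0 \<and> f (A @ B @ C) \<noteq> 0 \<longrightarrow>
        f B / f (A @ B) \<le> d * (f (B @ C) / f (A @ B @ C)))"

definition d_almost_smooth :: "real \<Rightarrow> ('a list \<Rightarrow> real) \<Rightarrow> bool" where
  "d_almost_smooth d f \<longleftrightarrow> almost_smooth 1 d f"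

end

theory Submission
  imports Defs
begin

text \<open>Monotonicity bounds f B by both f (A @ B) and f (B @ C), while subadditivity together with
  f C \<le> f (B @ C) bounds f (A @ B @ C) by f (A @ B) + f (B @ C). The claim then reduces to an
  inequality between reals: if 0 \<le> b \<le> min x y and z \<le> x + y \<le> 2 max x y, then
  b z \<le> min x y \<cdot> 2 max x y = 2 x y.\<close>

lemma divide_le_twice_divide:
  fixes b x y z :: real
  assumes "0 < x" "0 < z" "0 \<le> b" "b \<le> x" "b \<le> y" "z \<le> x + y"
  shows "b / x \<le> 2 * (y / z)"
proof -
  have "b * z \<le> 2 * (x * y)"
  proof (cases "y \<le> x")
    case True
    have "b * z \<le> y * z" using assms by (simp add: mult_right_mono)
    also have "\<dots> \<le> y * (2 * x)" using assms True by (intro mult_left_mono) auto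
    finally show ?thesis by (simp add: algebra_simps)
  next
    case False
    have "b * z \<le> x * z" using assms by (simp add: mult_right_mono)
    also have "\<dots> \<le> x * (2 * y)" using assms False by (intro mult_left_mono) auto
    finally show ?thesis by (simp add: algebra_simps)
  qed
  then show ?thesis using assms by (simp add: field_simps)
qed

lemma stream_monotone_le_append:
  assumes "stream_monotone f"
  shows "f B \<le> f (A @ B)" and "f A \<le> f (A @ B)"
  using assms unfolding stream_monotone_def by auto

lemma subadditive_overlap:
  assumes "subadditive f" "stream_monotone f"
  shows "f (A @ B @ C) \<le> f (A @ B) + f (B @ C)"
proof -
  have "f ((A @ B) @ C) \<le> f (A @ B) + f C"
    using assms(1) unfolding subadditive_def by blast
  moreover have "f C \<le> f (B @ C)"
    using assms(2) by (rule stream_monotone_le_append)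
  ultimately show ?thesis by simp
qed

theorem lemma2p4:
  fixes f :: "'a list \<Rightarrow> real"
  assumes "subadditive f" and "nonneg f" and "poly_bounded f" and "stream_monotone f"
  shows "d_almost_smooth 2 f"
  unfolding d_almost_smooth_def almost_smooth_def
proof (intro conjI allI impI)
  have nonneg: "\<And>X. 0 \<le> f X" using assms(2) unfolding nonneg_def by blast
  fix A B C :: "'a list"
  assume "f (A @ B) \<noteq> 0 \<and> f (A @ B @ C) \<noteq> 0"
  then have "0 < f (A @ B)" "0 < f (A @ B @ C)"
    using nonneg[of "A @ B"] nonneg[of "A @ B @ C"] by auto
  then show "f B / f (A @ B) \<le> 2 * (f (B @ C) / f (A @ B @ C))"
    using nonneg[of B] stream_monotone_le_append[OF assms(4)]
      subadditive_overlap[OF assms(1,4)]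
    by (intro divide_le_twice_divide) auto
next
  fix A B :: "'a list"
  show "f B \<le> 1 * f (A @ B)" using stream_monotone_le_append(1)[OF assms(4)] by simp
qed (use assms in \<open>auto simp: nonneg_def\<close>)

end
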